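(* Let $B\in\mathbb{Z}^{d\times j}$, $j\le d$, have linearly independent columns $B_1,\dots,B_j$. Then for every $\ell\in\{1,\dots,j\}$, $$|\Pi(B)\cap\mathbb{Z}^d|=\mathrm{frac}_B[\ell]\cdot|\Pi(B\setminus B_\ell)\cap\mathbb{Z}^d|.$$
   Context: For $B\in\mathbb{Z}^{d\times j}$ with linearly independent columns, the fundamental parallelepiped is $\Pi(B)=\{Bx: x\in[0,1)^j\}$ (for $j=0$, $\Pi$ of the empty matrix is $\{0\}$). $B\setminus B_\ell$ denotes the $d\times(j-1)$ matrix obtained by deleting column $B_\ell$. For every $b\in\mathbb{Z}^d$ in the real span of the columns of $B$ there is a unique $x\in\mathbb{Q}^j$ with $Bx=b$. The fractionality $\mathrm{frac}_B[i]$ of index $i$ is the maximum, over all such $b\in\mathbb{Z}^d\cap\operatorname{span}(B)$, of the denominator $z_i\ge1$ of $x_i$ written in lowest terms $x_i=y_i/z_i$ with $\gcd(y_i,z_i)=1$. *)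

theory Defs
  imports "HOL-Analysis.Analysis"
begin

text \<open>A matrix B in Z^(d x j) is represented by the list of its columns
  (each an integer vector indexed by the finite type 'd); j = length of the list.\<close>

definition rvec :: "int ^ 'd \<Rightarrow> real ^ 'd" where
  "rvec v = (\<chi> k. real_of_int (v $ k))"

definition lincomb :: "(int ^ 'd) list \<Rightarrow> (nat \<Rightarrow> real) \<Rightarrow> real ^ 'd" where
  "lincomb B x = (\<Sum>i<length B. x i *\<^sub>R rvec (B ! i))"

definition lin_indep_cols :: "(int ^ 'd) list \<Rightarrow> bool" where
  "lin_indep_cols B \<longleftrightarrow>
     (\<forall>x. lincomb B x = 0 \<longrightarrow> (\<forall>i<length B. x i = 0))"

definition fund_par :: "(int ^ 'd) list \<Rightarrow> (real ^ 'd) set" where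
  "fund_par B = {lincomb B x | x. \<forall>i<length B. 0 \<le> x i \<and> x i < 1}"

definition lattice_pts :: "(int ^ 'd) list \<Rightarrow> nat" where
  "lattice_pts B = card {v :: int ^ 'd. rvec v \<in> fund_par B}"

text \<open>B with column l deleted (0-based index l).\<close>
definition del_col :: "(int ^ 'd) list \<Rightarrow> nat \<Rightarrow> (int ^ 'd) list" where
  "del_col B l = take l B @ drop (Suc l) B"

text \<open>Fractionality of (0-based) index i: maximum denominator (in lowest terms) of
  the i-th coordinate of the rational coefficient vector x with Bx = b, over
  integer vectors b in the span of B.\<close>
definition frac :: "(int ^ 'd) list \<Rightarrow> nat \<Rightarrow> nat" where
  "frac B i = Max {nat (snd (quotient_of (x i))) | x b.
      lincomb B (\<lambda>k. of_rat (x k)) = rvec (b :: int ^ 'd)}"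

end

theory Submission
  imports Defs
begin

(* The coordinates x_l of the integer points Bx of span(B) form an additive subgroup G of the
   reals containing 1.  As Pi(B) contains only finitely many integer points, G meets [0,1) in a
   finite set, so G = (1/n)Z for some n > 0; thus all coordinates are rational, the fractionality
   of l is n, and exactly n values of x_l occur in Pi(B).  Translating by a point of Pi(B) with
   x_l = t and reducing modulo the lattice B Z^j maps the points with x_l = t bijectively onto
   those with x_l = 0, which are the integer points of Pi(B \ B_l). *)

lemma discrete_subgroup_reals_eq_multiples:
  fixes G :: "real set"
  assumes one: "1 \<in> G"
    and comb: "\<And>a c g h. g \<in> G \<Longrightarrow> h \<in> G \<Longrightarrow> of_int a * g + of_int c * h \<in> G"
    and fin: "finite {g \<in> G. 0 \<le> g \<and> g < 1}"
  obtains n :: nat where "n > 0" and "G = range (\<lambda>k. of_int k / of_nat n)"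
proof -
  define P where "P = {g \<in> G. 0 < g \<and> g \<le> 1}"
  have "finite P"
    by (rule finite_subset[OF _ finite_insert[THEN iffD2, OF fin, of 1]]) (auto simp: P_def)
  moreover have "1 \<in> P" using one by (simp add: P_def)
  ultimately have "Min P \<in> P" by (intro Min_in) auto
  define g0 where "g0 = Min P"
  have g0: "g0 \<in> G" "0 < g0" "g0 \<le> 1" using \<open>Min P \<in> P\<close> by (auto simp: g0_def P_def)
  have multiple: "\<exists>k. g = of_int k * g0" if "g \<in> G" for g
  proof -
    \<comment> \<open>The remainder of g modulo the least positive element g0 of G lies in G \<inter> [0, g0).\<close>
    define r where "r = g - of_int \<lfloor>g / g0\<rfloor> * g0"
    have "r \<in> G" using comb[OF that g0(1), of 1 "- \<lfloor>g / g0\<rfloor>"] by (simp add: r_def)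
    have "0 \<le> r" "r < g0"
      using g0(2) floor_divide_lower[of g0 g] floor_divide_upper[of g0 g]
      by (auto simp: r_def algebra_simps)
    have "r = 0"
    proof (rule ccontr)
      assume "r \<noteq> 0"
      then have "r \<in> P" using \<open>r \<in> G\<close> \<open>0 \<le> r\<close> \<open>r < g0\<close> g0(3) by (simp add: P_def)
      then have "g0 \<le> r" using \<open>finite P\<close> by (simp add: g0_def)
      with \<open>r < g0\<close> show False by simp
    qed
    then show ?thesis by (auto simp: r_def)
  qed
  obtain m where m: "1 = of_int m * g0" using multiple[OF one] by blast
  have "m > 0" using m g0(2) by (metis of_int_0_less_iff zero_less_mult_pos2 zero_less_one)
  define n where "n = nat m"
  have g0n: "g0 = 1 / of_nat n" using m \<open>m > 0\<close> by (simp add: n_def field_simps)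
  have "G = range (\<lambda>k. of_int k / of_nat n)"
  proof
    show "G \<subseteq> range (\<lambda>k. of_int k / of_nat n)" using multiple by (auto simp: g0n)
    show "range (\<lambda>k. of_int k / of_nat n) \<subseteq> G"
      using comb[OF g0(1) g0(1), of _ 0] by (auto simp: g0n)
  qed
  moreover have "n > 0" using \<open>m > 0\<close> by (simp add: n_def)
  ultimately show ?thesis using that by blast
qed

lemma card_multiples_in_unit_interval:
  assumes "n > 0"
  shows "card {g \<in> range (\<lambda>k. of_int k / of_nat n). 0 \<le> g \<and> g < (1::real)} = n"
proof -
  have "{g \<in> range (\<lambda>k. of_int k / of_nat n). 0 \<le> g \<and> g < (1::real)}
      = (\<lambda>k. of_int k / of_nat n) ` {0..<int n}"
    using assms by (auto simp: field_simps)
  moreover have "inj_on (\<lambda>k. of_int k / (of_nat n :: real)) {0..<int n}"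
    using assms by (auto simp: inj_on_def)
  ultimately show ?thesis by (simp add: card_image)
qed

lemma quotient_of_denom_dvd:
  assumes "quotient_of (of_int k / of_nat n) = (p, d)" "n > 0"
  shows "d dvd int n"
proof -
  have "of_int p / of_int d = (of_int k / of_nat n :: rat)"
    using quotient_of_div[OF assms(1)] by simp
  then have "p * int n = k * d" using assms(2) quotient_of_denom_pos[OF assms(1)]
    by (simp add: field_simps) (metis of_int_eq_iff of_int_mult of_int_of_nat_eq)
  then have "d dvd p * int n" by simp
  then show ?thesis
    using quotient_of_coprime[OF assms(1)] by (metis coprime_commute coprime_dvd_mult_right_iff)
qed

lemma Max_denominator_multiples:
  assumes "n > 0"
  shows "Max {nat (snd (quotient_of q)) | q. of_rat q \<in> range (\<lambda>k. of_int k / (of_nat n :: real))} = n"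
    (is "Max ?D = n")
proof (rule Max_eqI)
  show le: "y \<le> n" if "y \<in> ?D" for y
  proof -
    obtain q k where y: "y = nat (snd (quotient_of q))" and "of_rat q = (of_int k / of_nat n :: real)"
      using \<open>y \<in> ?D\<close> by blast
    then have "q = of_int k / of_nat n"
      by (metis of_rat_eq_iff of_rat_divide of_rat_of_int_eq of_rat_of_nat_eq)
    then have "snd (quotient_of q) dvd int n"
      using quotient_of_denom_dvd[of k n] assms by (cases "quotient_of q") auto
    then show ?thesis using assms y by (simp add: zdvd_imp_le nat_le_iff)
  qed
  then show "finite ?D" by (meson atMost_iff finite_atMost finite_subset subsetI)
  have "quotient_of (1 / of_nat n) = Rat.normalize (1, int n)"
    by (metis Fract_of_int_quotient of_int_1 of_int_of_nat_eq quotient_of_Fract)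
  also have "\<dots> = (1, int n)" using assms by (simp add: Rat.normalize_def)
  finally have "nat (snd (quotient_of (1 / of_nat n))) = n" by simp
  moreover have "of_rat (1 / of_nat n) = (of_int 1 / of_nat n :: real)" by (simp add: of_rat_divide)
  ultimately show "n \<in> ?D" by (metis (mono_tags, lifting) mem_Collect_eq rangeI)
qed

lemma lincomb_nth: "lincomb B x $ k = (\<Sum>i<length B. x i * real_of_int (B ! i $ k))"
  by (simp add: lincomb_def rvec_def)

lemma lincomb_cong: "(\<And>i. i < length B \<Longrightarrow> x i = y i) \<Longrightarrow> lincomb B x = lincomb B y"
  unfolding lincomb_def by (rule sum.cong) auto

lemma lincomb_add: "lincomb B (\<lambda>i. x i + y i) = lincomb B x + lincomb B y"
  unfolding lincomb_def by (simp add: scaleR_add_left sum.distrib)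

lemma lincomb_diff: "lincomb B (\<lambda>i. x i - y i) = lincomb B x - lincomb B y"
  unfolding lincomb_def by (simp add: scaleR_diff_left sum_subtractf)

lemma lincomb_scale: "lincomb B (\<lambda>i. c * x i) = c *\<^sub>R lincomb B x"
  unfolding lincomb_def by (simp add: scaleR_sum_right)

lemma lincomb_unit:
  assumes "i < length B"
  shows "lincomb B (\<lambda>k. if k = i then 1 else 0) = rvec (B ! i)"
proof -
  have "lincomb B (\<lambda>k. if k = i then 1 else 0) = (\<Sum>k<length B. if k = i then rvec (B ! k) else 0)"
    unfolding lincomb_def by (rule sum.cong) auto
  then show ?thesis using assms by simp
qed

lemma rvec_add: "rvec (u + v) = rvec u + rvec v"
  by (simp add: rvec_def vec_eq_iff)

lemma rvec_diff: "rvec (u - v) = rvec u - rvec v"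
  by (simp add: rvec_def vec_eq_iff)

lemma rvec_scale: "rvec (a *s v) = real_of_int a *\<^sub>R rvec v"
  by (simp add: rvec_def vec_eq_iff)

definition int_lincomb :: "(int ^ 'd) list \<Rightarrow> (nat \<Rightarrow> int) \<Rightarrow> int ^ 'd" where
  "int_lincomb B h = (\<Sum>i<length B. h i *s B ! i)"

lemma rvec_int_lincomb: "rvec (int_lincomb B h) = lincomb B (\<lambda>i. real_of_int (h i))"
  by (simp add: int_lincomb_def lincomb_def rvec_def vec_eq_iff)

lemma int_lincomb_diff: "int_lincomb B (\<lambda>i. h i - g i) = int_lincomb B h - int_lincomb B g"
  unfolding int_lincomb_def by (simp add: sum_subtractf vec_eq_iff algebra_simps)

lemma int_lincomb_uminus: "int_lincomb B (\<lambda>i. - h i) = - int_lincomb B h"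
  unfolding int_lincomb_def by (simp add: vec_eq_iff sum_negf)

lemma length_del_col: "l < length B \<Longrightarrow> length (del_col B l) = length B - 1"
  by (simp add: del_col_def)

lemma nth_del_col:
  "l < length B \<Longrightarrow> i < length B - 1 \<Longrightarrow> del_col B l ! i = B ! (if i < l then i else Suc i)"
  by (auto simp: del_col_def nth_append min_def)

lemma lincomb_del_col:
  assumes "l < length B"
  shows "lincomb (del_col B l) y =
     lincomb B (\<lambda>i. if i < l then y i else if i = l then 0 else y (i - 1))"
    (is "_ = lincomb B ?x")
proof -
  let ?n = "length B"
  define \<sigma> where "\<sigma> i = (if i < l then i else Suc i)" for i
  have "inj_on \<sigma> {..<?n - 1}" by (auto simp: inj_on_def \<sigma>_def)
  moreover have "\<sigma> ` {..<?n - 1} = {..<?n} - {l}"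
  proof
    show "\<sigma> ` {..<?n - 1} \<subseteq> {..<?n} - {l}" using assms by (auto simp: \<sigma>_def)
    show "{..<?n} - {l} \<subseteq> \<sigma> ` {..<?n - 1}"
    proof
      fix j assume j: "j \<in> {..<?n} - {l}"
      then have "j = \<sigma> (if j < l then j else j - 1)" by (auto simp: \<sigma>_def)
      moreover have "(if j < l then j else j - 1) < ?n - 1" using j assms by auto
      ultimately show "j \<in> \<sigma> ` {..<?n - 1}" by blast
    qed
  qed
  ultimately have reindex: "(\<Sum>i<?n - 1. ?x (\<sigma> i) *\<^sub>R rvec (B ! \<sigma> i))
      = (\<Sum>j\<in>{..<?n} - {l}. ?x j *\<^sub>R rvec (B ! j))"
    using sum.reindex[of \<sigma> "{..<?n - 1}" "\<lambda>j. ?x j *\<^sub>R rvec (B ! j)"] by simp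
  have "lincomb (del_col B l) y = (\<Sum>i<?n - 1. ?x (\<sigma> i) *\<^sub>R rvec (B ! \<sigma> i))"
    unfolding lincomb_def length_del_col[OF assms]
    by (rule sum.cong) (auto simp: nth_del_col[OF assms] \<sigma>_def)
  also have "\<dots> = (\<Sum>j<?n. ?x j *\<^sub>R rvec (B ! j))"
    unfolding reindex using assms by (subst (2) sum.remove[of _ l]) auto
  finally show ?thesis by (simp add: lincomb_def)
qed

lemma fund_par_del_col:
  assumes "l < length B"
  shows "fund_par (del_col B l) =
     {lincomb B x | x. x l = 0 \<and> (\<forall>i<length B. i \<noteq> l \<longrightarrow> 0 \<le> x i \<and> x i < 1)}"
    (is "_ = ?R")
proof (intro set_eqI iffI)
  fix v assume "v \<in> fund_par (del_col B l)"
  then obtain y where y: "v = lincomb (del_col B l) y" "\<forall>i<length B - 1. 0 \<le> y i \<and> y i < 1"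
    by (auto simp: fund_par_def length_del_col[OF assms])
  let ?x = "\<lambda>i. if i < l then y i else if i = l then 0 else y (i - 1)"
  have "v = lincomb B ?x" using y(1) lincomb_del_col[OF assms] by simp
  moreover have "\<forall>i<length B. i \<noteq> l \<longrightarrow> 0 \<le> ?x i \<and> ?x i < 1" using y(2) assms by auto
  ultimately show "v \<in> ?R" by (intro CollectI exI[of _ ?x]) simp
next
  fix v assume "v \<in> ?R"
  then obtain x where
    x: "v = lincomb B x" "x l = 0" "\<forall>i<length B. i \<noteq> l \<longrightarrow> 0 \<le> x i \<and> x i < 1"
    by blast
  define y where "y i = x (if i < l then i else Suc i)" for i
  have "lincomb (del_col B l) y = lincomb B x"
    unfolding lincomb_del_col[OF assms] by (rule lincomb_cong) (auto simp: y_def x(2))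
  moreover have "\<forall>i<length (del_col B l). 0 \<le> y i \<and> y i < 1"
    using x(3) by (auto simp: y_def length_del_col[OF assms])
  ultimately show "v \<in> fund_par (del_col B l)"
    unfolding fund_par_def x(1) by (intro CollectI exI[of _ y]) simp
qed

definition par_points :: "(int ^ 'd) list \<Rightarrow> (int ^ 'd) set" where
  "par_points B = {v. rvec v \<in> fund_par B}"

lemma finite_par_points: "finite (par_points B)"
proof -
  define M where "M = (\<Sum>k\<in>UNIV. \<Sum>i<length B. \<bar>B ! i $ k\<bar>)"
  have bound: "\<bar>v $ k\<bar> \<le> M" if v: "v \<in> par_points B" for v k
  proof -
    obtain x where x: "rvec v = lincomb B x" "\<forall>i<length B. 0 \<le> x i \<and> x i < 1"
      using v unfolding par_points_def fund_par_def by blast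
    have "real_of_int \<bar>v $ k\<bar> = \<bar>\<Sum>i<length B. x i * real_of_int (B ! i $ k)\<bar>"
      using arg_cong[OF x(1), of "\<lambda>w. \<bar>w $ k\<bar>"] by (simp add: lincomb_nth rvec_def)
    also have "\<dots> \<le> (\<Sum>i<length B. \<bar>x i * real_of_int (B ! i $ k)\<bar>)"
      by (rule sum_abs)
    also have "\<dots> \<le> (\<Sum>i<length B. real_of_int \<bar>B ! i $ k\<bar>)"
      using x(2) by (intro sum_mono) (simp add: abs_mult mult_left_le_one_le less_imp_le)
    finally have "\<bar>v $ k\<bar> \<le> (\<Sum>i<length B. \<bar>B ! i $ k\<bar>)"
      by (metis of_int_le_iff of_int_sum)
    also have "\<dots> \<le> M" unfolding M_def by (rule member_le_sum) (auto intro: sum_nonneg)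
    finally show ?thesis .
  qed
  have "par_points B \<subseteq> vec_lambda ` (UNIV \<rightarrow>\<^sub>E {-M..M})"
  proof
    fix v assume "v \<in> par_points B"
    then have "vec_nth v \<in> UNIV \<rightarrow>\<^sub>E {-M..M}" using bound[of v] by (force simp: abs_le_iff)
    then show "v \<in> vec_lambda ` (UNIV \<rightarrow>\<^sub>E {-M..M})" by (metis image_eqI vec_nth_inverse)
  qed
  moreover have "finite (vec_lambda ` (UNIV \<rightarrow>\<^sub>E {-M..M}) :: (int ^ 'd) set)"
    by (intro finite_imageI finite_PiE) auto
  ultimately show ?thesis by (rule finite_subset)
qed

definition coeff_set :: "(int ^ 'd) list \<Rightarrow> nat \<Rightarrow> real set" where
  "coeff_set B i = {x i | x b. lincomb B x = rvec b}"

lemma coeff_set_memI: "lincomb B x = rvec b \<Longrightarrow> x i \<in> coeff_set B i"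
  unfolding coeff_set_def by blast

lemma one_in_coeff_set: "i < length B \<Longrightarrow> 1 \<in> coeff_set B i"
  unfolding coeff_set_def by (intro CollectI exI[of _ "\<lambda>k. if k = i then 1 else 0"] exI conjI)
    (simp_all add: lincomb_unit)

lemma coeff_set_int_comb:
  assumes "g \<in> coeff_set B i" "h \<in> coeff_set B i"
  shows "of_int a * g + of_int c * h \<in> coeff_set B i"
proof -
  obtain x b y b' where "lincomb B x = rvec b" "g = x i" "lincomb B y = rvec b'" "h = y i"
    using assms by (auto simp: coeff_set_def)
  then have "lincomb B (\<lambda>k. of_int a * x k + of_int c * y k) = rvec (a *s b + c *s b')"
    by (simp add: lincomb_add lincomb_scale rvec_add rvec_scale)
  then show ?thesis
    unfolding coeff_set_def \<open>g = x i\<close> \<open>h = y i\<close>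
    by (intro CollectI exI[of _ "\<lambda>k. of_int a * x k + of_int c * y k"]) blast
qed

locale independent_columns =
  fixes B :: "(int ^ 'd) list"
  assumes independent: "lin_indep_cols B"
begin

lemma lincomb_eq_imp_coeff_eq:
  assumes "lincomb B x = lincomb B y" "i < length B"
  shows "x i = y i"
proof -
  have "lincomb B (\<lambda>i. x i - y i) = 0" using assms(1) by (simp add: lincomb_diff)
  then show ?thesis using independent assms(2) unfolding lin_indep_cols_def by auto
qed

definition in_span :: "int ^ 'd \<Rightarrow> bool" where
  "in_span v \<longleftrightarrow> (\<exists>x. lincomb B x = rvec v)"

(* Only the coordinates below length B are determined; the others are arbitrary. *)
definition coord :: "int ^ 'd \<Rightarrow> nat \<Rightarrow> real" where
  "coord v = (SOME x. lincomb B x = rvec v)"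

lemma lincomb_coord: "in_span v \<Longrightarrow> lincomb B (coord v) = rvec v"
  unfolding in_span_def coord_def by (rule someI_ex[where P = "\<lambda>x. lincomb B x = rvec v"])

lemma coord_eqI:
  assumes "lincomb B x = rvec v"
  shows "in_span v" and "i < length B \<Longrightarrow> coord v i = x i"
proof -
  show "in_span v" using assms by (auto simp: in_span_def)
  then show "i < length B \<Longrightarrow> coord v i = x i"
    using assms lincomb_coord lincomb_eq_imp_coeff_eq by metis
qed

lemma
  assumes "in_span u" "in_span v"
  shows in_span_add: "in_span (u + v)"
    and coord_add: "i < length B \<Longrightarrow> coord (u + v) i = coord u i + coord v i"
  using coord_eqI[of "\<lambda>i. coord u i + coord v i" "u + v"]
  by (simp_all add: lincomb_add rvec_add lincomb_coord assms)

lemma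
  assumes "in_span u" "in_span v"
  shows in_span_diff: "in_span (u - v)"
    and coord_diff: "i < length B \<Longrightarrow> coord (u - v) i = coord u i - coord v i"
  using coord_eqI[of "\<lambda>i. coord u i - coord v i" "u - v"]
  by (simp_all add: lincomb_diff rvec_diff lincomb_coord assms)

lemma
  shows in_span_int_lincomb: "in_span (int_lincomb B h)"
    and coord_int_lincomb: "i < length B \<Longrightarrow> coord (int_lincomb B h) i = of_int (h i)"
  using coord_eqI[OF rvec_int_lincomb[symmetric]] by simp_all

lemma mem_par_points_iff:
  "v \<in> par_points B \<longleftrightarrow> in_span v \<and> (\<forall>i<length B. 0 \<le> coord v i \<and> coord v i < 1)"
proof
  assume "v \<in> par_points B"
  then obtain x where "lincomb B x = rvec v" "\<forall>i<length B. 0 \<le> x i \<and> x i < 1"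
    by (auto simp: par_points_def fund_par_def)
  then show "in_span v \<and> (\<forall>i<length B. 0 \<le> coord v i \<and> coord v i < 1)"
    using coord_eqI by simp
next
  assume "in_span v \<and> (\<forall>i<length B. 0 \<le> coord v i \<and> coord v i < 1)"
  then show "v \<in> par_points B"
    unfolding par_points_def fund_par_def by (auto intro!: exI[of _ "coord v"] simp: lincomb_coord)
qed

lemma mem_par_points_del_col_iff:
  assumes "l < length B"
  shows "v \<in> par_points (del_col B l) \<longleftrightarrow> v \<in> par_points B \<and> coord v l = 0"
proof
  assume "v \<in> par_points (del_col B l)"
  then obtain x where "lincomb B x = rvec v" "x l = 0" "\<forall>i<length B. i \<noteq> l \<longrightarrow> 0 \<le> x i \<and> x i < 1"
    by (auto simp: par_points_def fund_par_del_col[OF assms])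
  then show "v \<in> par_points B \<and> coord v l = 0"
    using coord_eqI assms by (auto simp: mem_par_points_iff)
next
  assume v: "v \<in> par_points B \<and> coord v l = 0"
  then have "in_span v" "\<forall>i<length B. 0 \<le> coord v i \<and> coord v i < 1"
    by (auto simp: mem_par_points_iff)
  then show "v \<in> par_points (del_col B l)"
    unfolding par_points_def fund_par_del_col[OF assms] using v
    by (auto intro!: exI[of _ "coord v"] simp: lincomb_coord)
qed

lemma par_points_eq_if_lattice_congruent:
  assumes u: "u \<in> par_points B" and v: "v \<in> par_points B" and uv: "u = v + int_lincomb B h"
  shows "u = v"
proof -
  have "h i = 0" if i: "i < length B" for i
  proof -
    have "coord u i = coord v i + of_int (h i)"
      using uv coord_add[OF _ in_span_int_lincomb] v i by (simp add: mem_par_points_iff coord_int_lincomb)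
    moreover have "0 \<le> coord u i" "coord u i < 1" "0 \<le> coord v i" "coord v i < 1"
      using u v i by (auto simp: mem_par_points_iff)
    ultimately show ?thesis by linarith
  qed
  then have "int_lincomb B h = 0" unfolding int_lincomb_def by (intro sum.neutral) auto
  then show ?thesis using uv by simp
qed

definition reduce :: "int ^ 'd \<Rightarrow> int ^ 'd" where
  "reduce v = v - int_lincomb B (\<lambda>i. \<lfloor>coord v i\<rfloor>)"

lemma coord_reduce:
  "in_span v \<Longrightarrow> i < length B \<Longrightarrow> coord (reduce v) i = coord v i - of_int \<lfloor>coord v i\<rfloor>"
  unfolding reduce_def by (simp add: coord_diff in_span_int_lincomb coord_int_lincomb)

lemma reduce_mem_par_points:
  assumes "in_span v"
  shows "reduce v \<in> par_points B"
proof -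
  have "in_span (reduce v)" using assms by (simp add: reduce_def in_span_diff in_span_int_lincomb)
  then show ?thesis using assms by (auto simp: mem_par_points_iff coord_reduce floor_less_cancel)
qed

lemma reduce_eqI:
  assumes v: "v \<in> par_points B" and u: "u = v + int_lincomb B h"
  shows "reduce u = v"
proof (rule par_points_eq_if_lattice_congruent)
  have "in_span u" using u v in_span_add in_span_int_lincomb by (auto simp: mem_par_points_iff)
  then show "reduce u \<in> par_points B" by (rule reduce_mem_par_points)
  show "reduce u = v + int_lincomb B (\<lambda>i. h i - \<lfloor>coord u i\<rfloor>)"
    unfolding reduce_def using u by (simp add: int_lincomb_diff)
qed (rule v)

lemma reduce_translate_back:
  assumes "v \<in> par_points B"
  shows "reduce (reduce (v + z) - z) = v"
proof (rule reduce_eqI[OF assms])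
  show "reduce (v + z) - z = v + int_lincomb B (\<lambda>i. - \<lfloor>coord (v + z) i\<rfloor>)"
    by (simp add: reduce_def int_lincomb_uminus)
qed

end

lemma card_eq_card_image_mult_fibre:
  assumes "finite A" and "\<And>a. a \<in> A \<Longrightarrow> card {x \<in> A. f x = f a} = k"
  shows "card A = card (f ` A) * k"
proof -
  have "A = (\<Union>b\<in>f ` A. {x \<in> A. f x = b})" by auto
  also have "card \<dots> = (\<Sum>b\<in>f ` A. card {x \<in> A. f x = b})"
    by (rule card_UN_disjoint) (use assms(1) in auto)
  also have "\<dots> = (\<Sum>b\<in>f ` A. k)" using assms(2) by (intro sum.cong) auto
  finally show ?thesis by simp
qed

context independent_columns
begin

lemma card_fibre:
  assumes l: "l < length B" and w: "w \<in> par_points B"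
  shows "card {v \<in> par_points B. coord v l = coord w l} = card (par_points (del_col B l))"
proof -
  let ?F = "{v \<in> par_points B. coord v l = coord w l}"
  have span: "in_span v" if "v \<in> par_points B" for v using that by (simp add: mem_par_points_iff)
  have "bij_betw (\<lambda>v. reduce (v - w)) ?F (par_points (del_col B l))"
  proof (rule bij_betw_byWitness[where f' = "\<lambda>u. reduce (u + w)"])
    show "\<forall>v\<in>?F. reduce (reduce (v - w) + w) = v"
      using reduce_translate_back[of _ "- w"] by simp
    show "\<forall>u\<in>par_points (del_col B l). reduce (reduce (u + w) - w) = u"
      using reduce_translate_back by (simp add: mem_par_points_del_col_iff[OF l])
    show "(\<lambda>v. reduce (v - w)) ` ?F \<subseteq> par_points (del_col B l)"
    proof clarify
      fix v assume "v \<in> par_points B" "coord v l = coord w l"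
      then have "in_span (v - w)" "coord (v - w) l = 0"
        using span w l by (simp_all add: in_span_diff coord_diff)
      then show "reduce (v - w) \<in> par_points (del_col B l)"
        using l by (simp add: mem_par_points_del_col_iff reduce_mem_par_points coord_reduce)
    qed
    show "(\<lambda>u. reduce (u + w)) ` par_points (del_col B l) \<subseteq> ?F"
    proof clarify
      fix u assume "u \<in> par_points (del_col B l)"
      then have "in_span (u + w)" "coord (u + w) l = coord w l"
        using span w l by (simp_all add: mem_par_points_del_col_iff in_span_add coord_add)
      moreover have "0 \<le> coord w l" "coord w l < 1" using w l by (auto simp: mem_par_points_iff)
      ultimately show "reduce (u + w) \<in> par_points B \<and> coord (reduce (u + w)) l = coord w l"
        using l by (simp add: reduce_mem_par_points coord_reduce floor_eq_iff)
    qed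
  qed
  then show ?thesis by (rule bij_betw_same_card)
qed

lemma card_par_points_eq:
  assumes "l < length B"
  shows "card (par_points B) =
    card ((\<lambda>v. coord v l) ` par_points B) * card (par_points (del_col B l))"
  by (rule card_eq_card_image_mult_fibre[OF finite_par_points card_fibre[OF assms]])

lemma coeff_set_unit_interval:
  assumes i: "i < length B"
  shows "{g \<in> coeff_set B i. 0 \<le> g \<and> g < 1} = (\<lambda>v. coord v i) ` par_points B"
proof (intro set_eqI iffI)
  fix g assume "g \<in> {g \<in> coeff_set B i. 0 \<le> g \<and> g < 1}"
  then obtain x b where x: "lincomb B x = rvec b" "g = x i" "0 \<le> g" "g < 1"
    by (auto simp: coeff_set_def)
  then have "coord (reduce b) i = g"
    using coord_eqI[OF x(1)] i by (simp add: coord_reduce floor_eq_iff)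
  moreover have "reduce b \<in> par_points B" using coord_eqI(1)[OF x(1)] by (rule reduce_mem_par_points)
  ultimately show "g \<in> (\<lambda>v. coord v i) ` par_points B" by force
next
  fix g assume "g \<in> (\<lambda>v. coord v i) ` par_points B"
  then obtain v where v: "v \<in> par_points B" "g = coord v i" by blast
  then have "lincomb B (coord v) = rvec v" by (simp add: mem_par_points_iff lincomb_coord)
  then show "g \<in> {g \<in> coeff_set B i. 0 \<le> g \<and> g < 1}"
    using v i by (auto simp: coeff_set_def mem_par_points_iff)
qed

lemma coeff_set_eq_multiples:
  assumes "i < length B"
  obtains n :: nat where "n > 0" and "coeff_set B i = range (\<lambda>k. of_int k / of_nat n)"
proof (rule discrete_subgroup_reals_eq_multiples)
  show "1 \<in> coeff_set B i" using assms by (rule one_in_coeff_set)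
  show "finite {g \<in> coeff_set B i. 0 \<le> g \<and> g < 1}"
    unfolding coeff_set_unit_interval[OF assms] by (intro finite_imageI finite_par_points)
qed (use coeff_set_int_comb that in auto)

lemma coeff_rational:
  assumes "lincomb B x = rvec b" "i < length B"
  shows "x i \<in> \<rat>"
proof -
  obtain n :: nat where "coeff_set B i = range (\<lambda>k. of_int k / of_nat n)"
    using coeff_set_eq_multiples[OF assms(2)] by blast
  moreover have "x i \<in> coeff_set B i" using assms(1) by (rule coeff_set_memI)
  ultimately show ?thesis by auto
qed

lemma frac_eq_Max_denominators:
  assumes l: "l < length B"
  shows "frac B l = Max {nat (snd (quotient_of q)) | q. of_rat q \<in> coeff_set B l}"
proof -
  have "{nat (snd (quotient_of (x l))) | x b. lincomb B (\<lambda>k. of_rat (x k)) = rvec (b :: int ^ 'd)}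
      = {nat (snd (quotient_of q)) | q. of_rat q \<in> coeff_set B l}"
    (is "?S = ?T")
  proof (intro set_eqI iffI)
    fix n assume "n \<in> ?S"
    then obtain x b where "n = nat (snd (quotient_of (x l)))" "lincomb B (\<lambda>k. of_rat (x k)) = rvec b"
      by blast
    moreover from this(2) have "of_rat (x l) \<in> coeff_set B l"
      by (rule coeff_set_memI[of B "\<lambda>k. of_rat (x k)"])
    ultimately show "n \<in> ?T" by blast
  next
    fix n assume "n \<in> ?T"
    then obtain q y b where q: "n = nat (snd (quotient_of q))" "lincomb B y = rvec b" "of_rat q = y l"
      by (auto simp: coeff_set_def)
    define x where "x k = (SOME r. y k = of_rat r)" for k
    have x: "of_rat (x k) = y k" if "k < length B" for k
      using coeff_rational[OF q(2) that] unfolding x_def by (metis (mono_tags) Rats_cases someI_ex)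
    have "lincomb B (\<lambda>k. of_rat (x k)) = rvec b" using q(2) by (simp add: x cong: lincomb_cong)
    moreover have "x l = q" using x[OF l] q(3) by (metis of_rat_eq_iff)
    ultimately show "n \<in> ?S" using q(1) by blast
  qed
  then show ?thesis unfolding frac_def by simp
qed

end

theorem mainTheorem3:
  fixes B :: "(int ^ 'd) list" and l :: nat
  assumes "length B \<le> CARD('d)"
    and "lin_indep_cols B"
    and "l < length B"
  shows "lattice_pts B = frac B l * lattice_pts (del_col B l)"
proof -
  interpret independent_columns B by unfold_locales (rule assms(2))
  obtain n where n: "n > 0" "coeff_set B l = range (\<lambda>k. of_int k / of_nat n)"
    using coeff_set_eq_multiples[OF assms(3)] .
  have "card ((\<lambda>v. coord v l) ` par_points B) = n"
    using coeff_set_unit_interval[OF assms(3)] card_multiples_in_unit_interval[OF n(1)] n(2) by simp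
  moreover have "frac B l = n"
    using frac_eq_Max_denominators[OF assms(3)] Max_denominator_multiples[OF n(1)] n(2) by simp
  ultimately show ?thesis
    using card_par_points_eq[OF assms(3)] by (simp add: lattice_pts_def par_points_def)
qed

end
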